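(* For each notion of guarding $\mathfrak{g}$, there is a natural isomorphism \[ \theta : H^{\mathfrak{g}} \circ \mathbb{G}^{\mathfrak{g}} \; \cong \; \mathbb{H} \circ H^{\mathfrak{g}} \] such that, for all $\sigma$-structures $\mathcal{A}$ (omitting $\mathfrak{g}$), $\varepsilon_{H\mathcal{A}}\circ\theta_{\mathcal{A}} = H\varepsilon_{\mathcal{A}}$ and $\delta_{H\mathcal{A}}\circ\theta_{\mathcal{A}} = \mathbb{H}\theta_{\mathcal{A}}\circ\theta_{\mathbb{G}\mathcal{A}}\circ H\delta_{\mathcal{A}}$. Thus $\theta$ forms an Eilenberg-Moore law.
   Context: $\mathfrak{g}$ is atom, loose or clique guarding. $H^{\mathfrak{g}}$ is the functor from $\sigma$-structures to hypergraphs sending $\mathcal{A}$ to $(A,E)$ with $E$ the set of $\mathfrak{g}$-guarded subsets of $\mathcal{A}$. $\mathbb{G}^{\mathfrak{g}}$ is the guarded comonad on $\sigma$-structures and $\mathbb{H}$ the hypergraph comonad; both are built from equivalence classes $[p,a]$ of focussed plays $\langle p,a\rangle$ ($p$ a non-empty list of guarded sets, resp. hyperedges, $a$ in the last element), where $\langle p,a\rangle\sim\langle q,a'\rangle$ iff $a=a'$, $p\sqcap q$ non-empty, and $a$ lies in the last element of every play on the prefix-order paths from $p\sqcap q$ to $p$ and $q$. In $\mathbb{G}\mathcal{A}$, $R^{\mathbb{G}\mathcal{A}}=\{([p,a_1],\ldots,[p,a_r])\mid R^{\mathcal{A}}(a_1,\ldots,a_r)\}$; in $\mathbb{H}(V,E)$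 the hyperedges are $\{[p,a]\mid a\in U\}$ with $U\in E$ the last element of $p$. In both, $\varepsilon([p,a])=a$ and $\delta([[U_1,\ldots,U_n],a])=[[T_1,\ldots,T_n],[[U_1,\ldots,U_n],a]]$ with $T_j=\{[[U_1,\ldots,U_j],b]\mid b\in U_j\}$. *)

theory Defs
  imports Main "HOL-Library.Sublist"
begin

text \<open>A signature sigma is given by a type 'r of relation symbols together with an
arity function ar.\<close>

record ('r, 'a) struc =
  carrier :: "'a set"
  rel :: "'r \<Rightarrow> 'a list set"

definition wf_struc :: "('r \<Rightarrow> nat) \<Rightarrow> ('r, 'a) struc \<Rightarrow> bool" where
  "wf_struc ar A \<longleftrightarrow>
     (\<forall>R. \<forall>t \<in> rel A R. length t = ar R \<and> set t \<subseteq> carrier A)"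

definition struc_hom :: "('r, 'a) struc \<Rightarrow> ('r, 'b) struc \<Rightarrow> ('a \<Rightarrow> 'b) \<Rightarrow> bool" where
  "struc_hom A B f \<longleftrightarrow>
     (\<forall>a \<in> carrier A. f a \<in> carrier B) \<and>
     (\<forall>R. \<forall>t \<in> rel A R. map f t \<in> rel B R)"

datatype guarding = Atom | Loose | Clique

definition gaifman_adj :: "('r, 'a) struc \<Rightarrow> 'a \<Rightarrow> 'a \<Rightarrow> bool" where
  "gaifman_adj A a b \<longleftrightarrow> a \<noteq> b \<and> (\<exists>R. \<exists>t \<in> rel A R. a \<in> set t \<and> b \<in> set t)"

definition guarded :: "guarding \<Rightarrow> ('r, 'a) struc \<Rightarrow> 'a set set" where
  "guarded g A =
    (case g of
      Atom \<Rightarrow> {{a} | a. a \<in> carrier A} \<union> {set t | t R. t \<in> rel A R}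
    | Loose \<Rightarrow> {{a} | a. a \<in> carrier A} \<union>
        {\<Union>((set \<circ> snd) ` F) | F :: ('r \<times> 'a list) set.
            finite F \<and> (\<forall>(R, t) \<in> F. t \<in> rel A R) \<and>
            (\<forall>a \<in> \<Union>((set \<circ> snd) ` F). \<forall>b \<in> \<Union>((set \<circ> snd) ` F).
               a \<noteq> b \<longrightarrow> (\<exists>(R, t) \<in> F. a \<in> set t \<and> b \<in> set t))}
    | Clique \<Rightarrow> {S. finite S \<and> S \<subseteq> carrier A \<and>
        (\<forall>a \<in> S. \<forall>b \<in> S. a \<noteq> b \<longrightarrow> gaifman_adj A a b)})"

type_synonym 'a hypergraph = "'a set \<times> 'a set set"

definition hyper_hom :: "'a hypergraph \<Rightarrow> 'b hypergraph \<Rightarrow> ('a \<Rightarrow> 'b) \<Rightarrow> bool" where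
  "hyper_hom H K f \<longleftrightarrow>
     (\<forall>v \<in> fst H. f v \<in> fst K) \<and> (\<forall>e \<in> snd H. f ` e \<in> snd K)"

definition hyper_iso :: "'a hypergraph \<Rightarrow> 'b hypergraph \<Rightarrow> ('a \<Rightarrow> 'b) \<Rightarrow> bool" where
  "hyper_iso H K f \<longleftrightarrow> hyper_hom H K f \<and>
     (\<exists>g. hyper_hom K H g \<and> (\<forall>v \<in> fst H. g (f v) = v) \<and> (\<forall>w \<in> fst K. f (g w) = w))"

text \<open>The functor H^g on objects (on morphisms it acts as the identity on functions).\<close>

definition Hg :: "guarding \<Rightarrow> ('r, 'a) struc \<Rightarrow> 'a hypergraph" where
  "Hg g A = (carrier A, guarded g A)"

text \<open>Generic construction over a set E of "guards" (guarded sets of a structure,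
resp. hyperedges of a hypergraph).\<close>

type_synonym 'a pelem = "('a set list \<times> 'a) set"

definition fplays :: "'a set set \<Rightarrow> ('a set list \<times> 'a) set" where
  "fplays E = {(p, a). p \<noteq> [] \<and> set p \<subseteq> E \<and> a \<in> last p}"

definition play_eq :: "('a set list \<times> 'a) \<Rightarrow> ('a set list \<times> 'a) \<Rightarrow> bool" where
  "play_eq x y \<longleftrightarrow>
     (case x of (p, a) \<Rightarrow> case y of (q, a') \<Rightarrow>
        a = a' \<and> longest_common_prefix p q \<noteq> [] \<and>
        (\<forall>r. prefix (longest_common_prefix p q) r \<and> prefix r p \<longrightarrow> a \<in> last r) \<and>
        (\<forall>r. prefix (longest_common_prefix p q) r \<and> prefix r q \<longrightarrow> a \<in> last r))"

definition cls :: "'a set set \<Rightarrow> ('a set list \<times> 'a) \<Rightarrow> 'a pelem" where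
  "cls E x = {y \<in> fplays E. play_eq y x}"

definition pcar :: "'a set set \<Rightarrow> 'a pelem set" where
  "pcar E = cls E ` fplays E"

definition tset :: "'a set set \<Rightarrow> 'a set list \<Rightarrow> 'a pelem set" where
  "tset E p = (\<lambda>b. cls E (p, b)) ` last p"

definition pmap :: "'a set set \<Rightarrow> 'b set set \<Rightarrow> ('a \<Rightarrow> 'b) \<Rightarrow> 'a pelem \<Rightarrow> 'b pelem" where
  "pmap E E' f x = {y. \<exists>(p, a) \<in> x. y \<in> cls E' (map ((`) f) p, f a)}"

definition peps :: "'a pelem \<Rightarrow> 'a" where
  "peps x = snd (SOME y. y \<in> x)"

text \<open>Comultiplication: delta [[U1,...,Un], a] = [[T1,...,Tn], [[U1,...,Un], a]]
with T_j = {[[U1,...,Uj], b] | b in U_j}. E are the guards of the object, E' those of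
the object one level up (in which the outer play lives).\<close>

definition lift_play :: "'a set set \<Rightarrow> 'a set list \<Rightarrow> 'a pelem set list" where
  "lift_play E p = map (\<lambda>j. tset E (take j p)) [1..<Suc (length p)]"

definition pdelta :: "'a set set \<Rightarrow> 'a pelem set set \<Rightarrow> 'a pelem \<Rightarrow> 'a pelem pelem" where
  "pdelta E E' x = {y. \<exists>(p, a) \<in> x. y \<in> cls E' (lift_play E p, x)}"

definition HH :: "'a hypergraph \<Rightarrow> 'a pelem hypergraph" where
  "HH H = (pcar (snd H), {tset (snd H) p | p. p \<noteq> [] \<and> set p \<subseteq> snd H})"

definition HH_map :: "'a hypergraph \<Rightarrow> 'b hypergraph \<Rightarrow> ('a \<Rightarrow> 'b) \<Rightarrow> 'a pelem \<Rightarrow> 'b pelem" where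
  "HH_map H K f = pmap (snd H) (snd K) f"

definition HH_eps :: "'a hypergraph \<Rightarrow> 'a pelem \<Rightarrow> 'a" where
  "HH_eps H = peps"

definition HH_delta :: "'a hypergraph \<Rightarrow> 'a pelem \<Rightarrow> 'a pelem pelem" where
  "HH_delta H = pdelta (snd H) (snd (HH H))"

definition GG :: "guarding \<Rightarrow> ('r, 'a) struc \<Rightarrow> ('r, 'a pelem) struc" where
  "GG g A =
    \<lparr> carrier = pcar (guarded g A),
      rel = (\<lambda>R. {map (\<lambda>b. cls (guarded g A) (p, b)) t | p t.
                    p \<noteq> [] \<and> set p \<subseteq> guarded g A \<and> t \<in> rel A R \<and> set t \<subseteq> last p}) \<rparr>"

definition GG_map :: "guarding \<Rightarrow> ('r, 'a) struc \<Rightarrow> ('r, 'b) struc \<Rightarrow> ('a \<Rightarrow> 'b)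
    \<Rightarrow> 'a pelem \<Rightarrow> 'b pelem" where
  "GG_map g A B f = pmap (guarded g A) (guarded g B) f"

definition GG_eps :: "guarding \<Rightarrow> ('r, 'a) struc \<Rightarrow> 'a pelem \<Rightarrow> 'a" where
  "GG_eps g A = peps"

definition GG_delta :: "guarding \<Rightarrow> ('r, 'a) struc \<Rightarrow> 'a pelem \<Rightarrow> 'a pelem pelem" where
  "GG_delta g A = pdelta (guarded g A) (guarded g (GG g A))"

text \<open>In this encoding, the vertex set of H^g(G A) and of H(H^g A) are literally the
same set of classes [p, a] (plays of guarded sets of A), and theta_A is the identity on
them.\<close>

definition theta :: "guarding \<Rightarrow> ('r, 'a) struc \<Rightarrow> 'a pelem \<Rightarrow> 'a pelem" where
  "theta g A = (\<lambda>x. x)"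

end

theory Submission
  imports Defs
begin

(* Both hypergraphs have the classes [p, a] as vertices and theta is the identity, so naturality
   and the counit law hold by definition, and the isomorphism amounts to the guarded sets of G A
   being exactly the sets T_p = {[p, b] | b in last p}.
   A set T_p is guarded because b |-> [p, b] carries the guarded set last p into G A like a
   homomorphism; for cliques, extend p by the tuple witnessing an adjacency.
   Conversely, a guarded set S of G A is a Gaifman clique, so any two of its elements have
   representatives on a common play. Comparing the shortest representatives ("roots") shows
   that all of S lies on one play q; the counit is a homomorphism G A -> A, so U = eps S is
   guarded in A, and S = T_(q @ [U]).
   The comultiplication law then holds because delta yields unions of classes, which the action
   of the identity fixes. *)

section \<open>Plays and their classes\<close>

definition focus_path :: "'a \<Rightarrow> 'a set list \<Rightarrow> 'a set list \<Rightarrow> bool" where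
  "focus_path a m p \<longleftrightarrow> prefix m p \<and> (\<forall>r. prefix m r \<and> prefix r p \<longrightarrow> a \<in> last r)"

lemma focus_path_refl: "a \<in> last m \<Longrightarrow> focus_path a m m"
  unfolding focus_path_def using prefix_order.antisym by blast

lemma focus_path_prefix:
  assumes "focus_path a m p" "prefix m m'" "prefix m' p"
  shows "focus_path a m m'"
  using assms prefix_order.trans[OF _ assms(3)] unfolding focus_path_def by blast

lemma focus_path_trans:
  assumes "focus_path a m m'" "focus_path a m' p"
  shows "focus_path a m p"
  unfolding focus_path_def
proof (intro conjI allI impI)
  have "prefix m m'" "prefix m' p"
    using assms unfolding focus_path_def by blast+
  then show "prefix m p"
    by (rule prefix_order.trans)
  fix r
  assume r: "prefix m r \<and> prefix r p"
  with \<open>prefix m' p\<close> have "prefix r m' \<or> prefix m' r"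
    using prefix_same_cases by blast
  with r assms show "a \<in> last r"
    unfolding focus_path_def by blast
qed

lemma focus_path_in_last_start: "focus_path a m p \<Longrightarrow> a \<in> last m"
  unfolding focus_path_def by blast

lemma focus_path_in_last: "focus_path a m p \<Longrightarrow> a \<in> last p"
  unfolding focus_path_def by blast

lemma play_eq_iff_focus_path:
  "play_eq (p, a) (q, b) \<longleftrightarrow> a = b \<and> (\<exists>m. m \<noteq> [] \<and> focus_path a m p \<and> focus_path a m q)"
    (is "_ \<longleftrightarrow> _ \<and> (\<exists>m. ?P m)")
proof
  let ?l = "longest_common_prefix p q"
  assume eq: "play_eq (p, a) (q, b)"
  then have "a = b" "?l \<noteq> []"
    and "\<forall>r. prefix ?l r \<and> prefix r p \<longrightarrow> a \<in> last r"
    and "\<forall>r. prefix ?l r \<and> prefix r q \<longrightarrow> a \<in> last r"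
    unfolding play_eq_def prod.case by blast+
  then have "?P ?l"
    unfolding focus_path_def
    by (simp add: longest_common_prefix_prefix1 longest_common_prefix_prefix2)
  with \<open>a = b\<close> show "a = b \<and> (\<exists>m. ?P m)"
    by blast
next
  let ?l = "longest_common_prefix p q"
  assume "a = b \<and> (\<exists>m. ?P m)"
  then obtain m where "a = b" "m \<noteq> []" and mp: "focus_path a m p" and mq: "focus_path a m q"
    by blast
  have m: "prefix m ?l"
    using mp mq unfolding focus_path_def by (simp add: longest_common_prefix_max_prefix)
  with \<open>m \<noteq> []\<close> have "?l \<noteq> []"
    by auto
  moreover have "\<forall>r. prefix ?l r \<and> prefix r p \<longrightarrow> a \<in> last r"
    using mp prefix_order.trans[OF m] unfolding focus_path_def by blast
  moreover have "\<forall>r. prefix ?l r \<and> prefix r q \<longrightarrow> a \<in> last r"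
    using mq prefix_order.trans[OF m] unfolding focus_path_def by blast
  ultimately show "play_eq (p, a) (q, b)"
    unfolding play_eq_def using \<open>a = b\<close> by simp
qed

lemma play_eq_sym: "play_eq x y \<Longrightarrow> play_eq y x"
  by (cases x; cases y) (auto simp: play_eq_iff_focus_path)

lemma play_eq_trans:
  assumes "play_eq x y" "play_eq y z"
  shows "play_eq x z"
proof -
  obtain p a q b s c where xyz: "x = (p, a)" "y = (q, b)" "z = (s, c)"
    by (cases x, cases y, cases z)
  from assms(1) obtain m1 where "b = a" and m1: "m1 \<noteq> []" "focus_path a m1 p" "focus_path a m1 q"
    unfolding xyz play_eq_iff_focus_path by blast
  with assms(2) obtain m2 where "c = a" and m2: "m2 \<noteq> []" "focus_path a m2 q" "focus_path a m2 s"
    unfolding xyz play_eq_iff_focus_path by blast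
  have "prefix m1 q" "prefix m2 q"
    using m1 m2 unfolding focus_path_def by blast+
  then have "prefix m1 m2 \<or> prefix m2 m1"
    by (rule prefix_same_cases)
  then show ?thesis
  proof
    assume "prefix m1 m2"
    with m1(3) have "focus_path a m1 m2"
      using \<open>prefix m2 q\<close> by (rule focus_path_prefix)
    then have "focus_path a m1 s"
      using m2(3) by (rule focus_path_trans)
    then show ?thesis
      unfolding xyz play_eq_iff_focus_path using m1 \<open>c = a\<close> by blast
  next
    assume "prefix m2 m1"
    with m2(2) have "focus_path a m2 m1"
      using \<open>prefix m1 q\<close> by (rule focus_path_prefix)
    then have "focus_path a m2 p"
      using m1(2) by (rule focus_path_trans)
    then show ?thesis
      unfolding xyz play_eq_iff_focus_path using m2 \<open>c = a\<close> by blast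
  qed
qed

lemma fplaysI: "p \<noteq> [] \<Longrightarrow> set p \<subseteq> E \<Longrightarrow> b \<in> last p \<Longrightarrow> (p, b) \<in> fplays E"
  by (simp add: fplays_def)

lemma play_eq_refl: "x \<in> fplays E \<Longrightarrow> play_eq x x"
  by (cases x) (auto simp: play_eq_iff_focus_path fplays_def intro: focus_path_refl)

lemma cls_subset_fplays: "cls E x \<subseteq> fplays E"
  unfolding cls_def by blast

lemma in_cls_self: "x \<in> fplays E \<Longrightarrow> x \<in> cls E x"
  unfolding cls_def using play_eq_refl by blast

lemma cls_eq:
  assumes "y \<in> cls E z"
  shows "cls E y = cls E z"
proof -
  have yz: "play_eq y z"
    using assms unfolding cls_def by blast
  then have "play_eq w y \<longleftrightarrow> play_eq w z" for w
    using play_eq_trans[of w y z] play_eq_trans[of w z y] play_eq_sym[OF yz] by blast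
  then show ?thesis
    unfolding cls_def by blast
qed

lemma peps_cls: "z \<in> fplays E \<Longrightarrow> peps (cls E z) = snd z"
proof -
  assume "z \<in> fplays E"
  then have "\<exists>y. y \<in> cls E z" using in_cls_self by blast
  then show ?thesis
    unfolding peps_def by (rule someI2_ex) (auto simp: cls_def play_eq_def split: prod.splits)
qed

lemma cls_in_pcar: "z \<in> fplays E \<Longrightarrow> cls E z \<in> pcar E"
  unfolding pcar_def by blast

lemma pcar_eq_cls:
  assumes "x \<in> pcar E" "y \<in> x"
  shows "x = cls E y"
proof -
  from assms(1) obtain z where "x = cls E z"
    unfolding pcar_def by blast
  with assms(2) show ?thesis
    using cls_eq[of y E z] by simp
qed

lemma pcar_subset_fplays: "x \<in> pcar E \<Longrightarrow> x \<subseteq> fplays E"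
  unfolding pcar_def using cls_subset_fplays by blast

lemma pcarE:
  assumes "x \<in> pcar E"
  obtains q where "(q, peps x) \<in> x" "(q, peps x) \<in> fplays E"
proof -
  from assms obtain z where z: "z \<in> fplays E" "x = cls E z"
    unfolding pcar_def by blast
  then have "z = (fst z, peps x)"
    using peps_cls[OF z(1)] by simp
  with z show thesis
    using that[of "fst z"] in_cls_self[OF z(1)] by simp
qed

lemma cls_snoc:
  assumes "(p, a) \<in> fplays E" "U \<in> E" "a \<in> U"
  shows "cls E (p @ [U], a) = cls E (p, a)"
proof (rule cls_eq)
  have "p \<noteq> []" "a \<in> last p" using assms(1) by (auto simp: fplays_def)
  then have "focus_path a p (p @ [U])" "focus_path a p p"
    using assms(3) prefix_order.antisym by (fastforce simp: focus_path_def)+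
  then have "play_eq (p @ [U], a) (p, a)"
    unfolding play_eq_iff_focus_path using \<open>p \<noteq> []\<close> by blast
  moreover have "(p @ [U], a) \<in> fplays E"
    using assms by (simp add: fplays_def)
  ultimately show "(p @ [U], a) \<in> cls E (p, a)"
    unfolding cls_def by blast
qed

definition share_play :: "'a pelem \<Rightarrow> 'a pelem \<Rightarrow> bool" where
  "share_play x y \<longleftrightarrow> (\<exists>q. (q, peps x) \<in> x \<and> (q, peps y) \<in> y)"

lemma share_play_refl:
  assumes "x \<in> pcar E"
  shows "share_play x x"
proof -
  obtain q where "(q, peps x) \<in> x"
    using assms by (rule pcarE)
  then show ?thesis
    unfolding share_play_def by blast
qed

definition root :: "'a pelem \<Rightarrow> 'a set list" where
  "root x = arg_min length (\<lambda>q. (q, peps x) \<in> x)"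

lemma root_in:
  assumes "x \<in> pcar E"
  shows "(root x, peps x) \<in> x"
proof -
  obtain q where "(q, peps x) \<in> x"
    using assms by (rule pcarE)
  then show ?thesis
    unfolding root_def by (rule arg_min_natI)
qed

lemma focus_path_root:
  assumes x: "x \<in> pcar E" and q: "(q, peps x) \<in> x"
  shows "focus_path (peps x) (root x) q"
proof -
  let ?a = "peps x"
  have r: "(root x, ?a) \<in> x"
    using x by (rule root_in)
  then have "play_eq (q, ?a) (root x, ?a)"
    using q pcar_eq_cls[OF x r] unfolding cls_def by blast
  then obtain m where m: "m \<noteq> []" "focus_path ?a m q" "focus_path ?a m (root x)"
    unfolding play_eq_iff_focus_path by blast
  have "prefix m (root x)"
    using m(3) unfolding focus_path_def by blast
  moreover have "(root x, ?a) \<in> fplays E"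
    using r x pcar_subset_fplays by blast
  ultimately have "(m, ?a) \<in> fplays E"
    using m(1) focus_path_in_last_start[OF m(2)] set_mono_prefix unfolding fplays_def by fastforce
  moreover have "play_eq (m, ?a) (root x, ?a)"
    unfolding play_eq_iff_focus_path
    using m focus_path_refl[OF focus_path_in_last_start[OF m(2)]] by blast
  ultimately have "(m, ?a) \<in> x"
    using pcar_eq_cls[OF x r] unfolding cls_def by blast
  then have "length (root x) \<le> length m"
    unfolding root_def by (rule arg_min_nat_le)
  with \<open>prefix m (root x)\<close> have "m = root x"
    using prefix_length_prefix[OF prefix_order.refl] prefix_order.antisym by blast
  with m(2) show ?thesis
    by simp
qed

text \<open>The common play is the longest of the roots.\<close>

lemma ex_common_play:
  assumes "finite S" "S \<noteq> {}" "S \<subseteq> pcar E" and share: "\<forall>x\<in>S. \<forall>y\<in>S. share_play x y"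
  shows "\<exists>q. \<forall>x\<in>S. (q, peps x) \<in> x"
proof -
  have "Max ((length \<circ> root) ` S) \<in> (length \<circ> root) ` S"
    using assms(1,2) by simp
  then obtain z where z: "z \<in> S" "Max ((length \<circ> root) ` S) = length (root z)"
    by auto
  have longest: "length (root x) \<le> length (root z)" if "x \<in> S" for x
    using z that assms(1) by (metis Max_ge comp_apply finite_imageI imageI)
  have "(root z, peps x) \<in> x" if x: "x \<in> S" for x
  proof -
    obtain q where q: "(q, peps x) \<in> x" "(q, peps z) \<in> z"
      using share x z(1) unfolding share_play_def by blast
    have xz: "x \<in> pcar E" "z \<in> pcar E"
      using x z(1) assms(3) by blast+
    have fx: "focus_path (peps x) (root x) q"
      using focus_path_root[OF xz(1) q(1)] .
    have "prefix (root z) q"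
      using focus_path_root[OF xz(2) q(2)] unfolding focus_path_def by blast
    moreover have "prefix (root x) q"
      using fx unfolding focus_path_def by blast
    ultimately have "prefix (root x) (root z)"
      using prefix_length_prefix longest[OF x] by blast
    with fx have fxz: "focus_path (peps x) (root x) (root z)"
      using \<open>prefix (root z) q\<close> by (rule focus_path_prefix)
    have "(root z, peps z) \<in> fplays E" "(root x, peps x) \<in> fplays E"
      using root_in xz pcar_subset_fplays by blast+
    then have "(root z, peps x) \<in> fplays E" "root x \<noteq> []"
      using focus_path_in_last[OF fxz] unfolding fplays_def by auto
    moreover have "play_eq (root z, peps x) (root x, peps x)"
      unfolding play_eq_iff_focus_path
      using \<open>root x \<noteq> []\<close> fxz focus_path_refl[OF focus_path_in_last_start[OF fxz]] by blast
    ultimately show ?thesis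
      using pcar_eq_cls[OF xz(1) root_in[OF xz(1)]] unfolding cls_def by blast
  qed
  then show ?thesis
    by blast
qed

lemma ex_tset_eq_if_share_play:
  assumes "finite S" "S \<subseteq> pcar E" "\<forall>x\<in>S. \<forall>y\<in>S. share_play x y" and foci: "peps ` S \<in> E"
  shows "\<exists>p. p \<noteq> [] \<and> set p \<subseteq> E \<and> S = tset E p"
proof (cases "S = {}")
  case True
  with foci show ?thesis
    by (intro exI[of _ "[{}]"]) (auto simp: tset_def)
next
  case False
  then obtain q where q: "\<forall>x\<in>S. (q, peps x) \<in> x"
    using ex_common_play[OF assms(1) False assms(2,3)] by blast
  have qx: "(q, peps x) \<in> fplays E" if "x \<in> S" for x
    using q that assms(2) pcar_subset_fplays by blast
  obtain x0 where "x0 \<in> S"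
    using False by blast
  then have "q \<noteq> []" "set q \<subseteq> E"
    using qx[of x0] unfolding fplays_def by auto
  let ?p = "q @ [peps ` S]"
  have cls_p: "cls E (?p, peps x) = x" if x: "x \<in> S" for x
  proof -
    have "cls E (?p, peps x) = cls E (q, peps x)"
      using cls_snoc[OF qx[OF x] foci] x by blast
    also have "\<dots> = x"
      using pcar_eq_cls[of x E "(q, peps x)"] q x assms(2) by blast
    finally show ?thesis .
  qed
  have "tset E ?p = (\<lambda>x. cls E (?p, peps x)) ` S"
    unfolding tset_def by (simp add: image_image)
  also have "\<dots> = (\<lambda>x. x) ` S"
    using cls_p by (rule image_cong[OF refl])
  also have "\<dots> = S"
    by simp
  finally show ?thesis
    using \<open>q \<noteq> []\<close> \<open>set q \<subseteq> E\<close> foci by (intro exI[of _ ?p]) auto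
qed

section \<open>Guarded sets\<close>

lemma guarded_Atom_cases:
  assumes "U \<in> guarded Atom A"
  obtains (single) a where "U = {a}" "a \<in> carrier A"
    | (tuple) R t where "t \<in> rel A R" "U = set t"
  using assms unfolding guarded_def by auto

lemma guarded_Loose_cases:
  assumes "U \<in> guarded Loose A"
  obtains (single) a where "U = {a}" "a \<in> carrier A"
    | (family) F where "finite F" "\<forall>(R, t) \<in> F. t \<in> rel A R" "U = \<Union>((set \<circ> snd) ` F)"
        "\<forall>a \<in> U. \<forall>b \<in> U. a \<noteq> b \<longrightarrow> (\<exists>(R, t) \<in> F. a \<in> set t \<and> b \<in> set t)"
  using assms unfolding guarded_def by auto

lemma guarded_Loose_familyI:
  assumes "finite F" "\<forall>(R, t) \<in> F. t \<in> rel A R"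
    "\<forall>a \<in> \<Union>((set \<circ> snd) ` F). \<forall>b \<in> \<Union>((set \<circ> snd) ` F).
       a \<noteq> b \<longrightarrow> (\<exists>(R, t) \<in> F. a \<in> set t \<and> b \<in> set t)"
  shows "\<Union>((set \<circ> snd) ` F) \<in> guarded Loose A"
  using assms unfolding guarded_def by auto

lemma guarded_Clique_iff:
  "U \<in> guarded Clique A \<longleftrightarrow>
     finite U \<and> U \<subseteq> carrier A \<and> (\<forall>a \<in> U. \<forall>b \<in> U. a \<noteq> b \<longrightarrow> gaifman_adj A a b)"
  unfolding guarded_def by simp

lemma singleton_guarded: "a \<in> carrier A \<Longrightarrow> {a} \<in> guarded g A"
  by (cases g) (auto simp: guarded_def)

lemma set_tuple_guarded:
  assumes wf: "wf_struc ar A" and t: "t \<in> rel A R"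
  shows "set t \<in> guarded g A"
proof (cases g)
  case Atom
  with t show ?thesis
    unfolding guarded_def by auto
next
  case Loose
  have "\<Union>((set \<circ> snd) ` {(R, t)}) \<in> guarded Loose A"
    using t by (intro guarded_Loose_familyI) auto
  with Loose show ?thesis
    by simp
next
  case Clique
  have "set t \<subseteq> carrier A"
    using wf t unfolding wf_struc_def by blast
  moreover have "\<forall>a \<in> set t. \<forall>b \<in> set t. a \<noteq> b \<longrightarrow> gaifman_adj A a b"
    using t unfolding gaifman_adj_def by blast
  ultimately show ?thesis
    unfolding Clique guarded_Clique_iff by simp
qed

lemma guarded_imp_clique:
  assumes wf: "wf_struc ar A" and U: "U \<in> guarded g A"
  shows "U \<in> guarded Clique A"
proof -
  have tuple_carrier: "set t \<subseteq> carrier A" if "t \<in> rel A R" for R t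
    using wf that unfolding wf_struc_def by blast
  show ?thesis
  proof (cases g)
    case Atom
    from U[unfolded Atom] show ?thesis
    proof (cases rule: guarded_Atom_cases)
      case (single a)
      then show ?thesis
        by (simp add: singleton_guarded)
    next
      case (tuple R t)
      then show ?thesis
        using set_tuple_guarded[OF wf] by blast
    qed
  next
    case Loose
    from U[unfolded Loose] show ?thesis
    proof (cases rule: guarded_Loose_cases)
      case (single a)
      then show ?thesis
        by (simp add: singleton_guarded)
    next
      case (family F)
      have "set t \<subseteq> carrier A" if "(R, t) \<in> F" for R t
        using family(2) that tuple_carrier by blast
      with family(3) have "U \<subseteq> carrier A"
        by (auto simp: case_prod_beta) (metis prod.collapse subsetD)
      moreover have "finite U"
        using family(1,3) by simp
      moreover have "gaifman_adj A a b" if "a \<in> U" "b \<in> U" "a \<noteq> b" for a b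
        using family(2,4) that unfolding gaifman_adj_def by blast
      ultimately show ?thesis
        unfolding guarded_Clique_iff by blast
    qed
  next
    case Clique
    with U show ?thesis
      by simp
  qed
qed

lemma guarded_subset_carrier:
  assumes "wf_struc ar A" "U \<in> guarded g A"
  shows "U \<subseteq> carrier A"
  using guarded_imp_clique[OF assms] unfolding guarded_Clique_iff by blast

lemma guarded_Atom_image:
  assumes U: "U \<in> guarded Atom A"
    and carrier: "\<And>a. a \<in> U \<Longrightarrow> h a \<in> carrier B"
    and rel: "\<And>R t. t \<in> rel A R \<Longrightarrow> set t \<subseteq> U \<Longrightarrow> map h t \<in> rel B R"
  shows "h ` U \<in> guarded Atom B"
  using U
proof (cases rule: guarded_Atom_cases)
  case (single a)
  then show ?thesis
    using carrier by (simp add: singleton_guarded)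
next
  case (tuple R t)
  then have "map h t \<in> rel B R"
    using rel by simp
  with tuple show ?thesis
    unfolding guarded_def by auto
qed

lemma guarded_Loose_image:
  assumes U: "U \<in> guarded Loose A"
    and carrier: "\<And>a. a \<in> U \<Longrightarrow> h a \<in> carrier B"
    and rel: "\<And>R t. t \<in> rel A R \<Longrightarrow> set t \<subseteq> U \<Longrightarrow> map h t \<in> rel B R"
  shows "h ` U \<in> guarded Loose B"
  using U
proof (cases rule: guarded_Loose_cases)
  case (single a)
  then show ?thesis
    using carrier by (simp add: singleton_guarded)
next
  case (family F)
  let ?F = "(\<lambda>(R, t). (R, map h t)) ` F"
  have image: "h ` U = \<Union>((set \<circ> snd) ` ?F)"
    unfolding family(3) by (simp add: image_UN image_image case_prod_beta)
  have "finite ?F"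
    using family(1) by simp
  moreover have "\<forall>(R, t) \<in> ?F. t \<in> rel B R"
    using family(2,3) rel by fastforce
  moreover have "\<forall>x \<in> h ` U. \<forall>y \<in> h ` U. x \<noteq> y \<longrightarrow> (\<exists>(R, t) \<in> ?F. x \<in> set t \<and> y \<in> set t)"
  proof (intro ballI impI)
    fix x y
    assume "x \<in> h ` U" "y \<in> h ` U" "x \<noteq> y"
    then obtain a b where "a \<in> U" "b \<in> U" "a \<noteq> b" "x = h a" "y = h b"
      by blast
    then obtain R t where "(R, t) \<in> F" "a \<in> set t" "b \<in> set t"
      using family(4) by blast
    with \<open>x = h a\<close> \<open>y = h b\<close> show "\<exists>(R, t) \<in> ?F. x \<in> set t \<and> y \<in> set t"
      by force
  qed
  ultimately show ?thesis
    unfolding image by (intro guarded_Loose_familyI) (simp_all only: image[symmetric])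
qed

lemma guarded_Clique_image:
  assumes U: "U \<in> guarded Clique A"
    and carrier: "\<And>a. a \<in> U \<Longrightarrow> h a \<in> carrier B"
    and adj: "\<And>a b. a \<in> U \<Longrightarrow> b \<in> U \<Longrightarrow> gaifman_adj A a b \<Longrightarrow> h a \<noteq> h b \<Longrightarrow>
      gaifman_adj B (h a) (h b)"
  shows "h ` U \<in> guarded Clique B"
proof -
  have "gaifman_adj B x y" if xy: "x \<in> h ` U" "y \<in> h ` U" "x \<noteq> y" for x y
  proof -
    obtain a b where ab: "a \<in> U" "b \<in> U" "x = h a" "y = h b"
      using xy(1,2) by blast
    with xy(3) have "h a \<noteq> h b" "a \<noteq> b"
      by auto
    with ab(1,2) have "gaifman_adj A a b"
      using U[unfolded guarded_Clique_iff] by blast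
    with ab show ?thesis
      using adj[OF ab(1,2) _ \<open>h a \<noteq> h b\<close>] by simp
  qed
  moreover have "finite (h ` U)"
    using U[unfolded guarded_Clique_iff] by simp
  moreover have "h ` U \<subseteq> carrier B"
    using carrier by blast
  ultimately show ?thesis
    unfolding guarded_Clique_iff by blast
qed

text \<open>For cliques the tuples witnessing adjacency need not lie inside U, hence the separate
hypothesis on the Gaifman graph.\<close>

lemma guarded_image:
  assumes U: "U \<in> guarded g A"
    and carrier: "\<And>a. a \<in> U \<Longrightarrow> h a \<in> carrier B"
    and rel: "\<And>R t. t \<in> rel A R \<Longrightarrow> set t \<subseteq> U \<Longrightarrow> map h t \<in> rel B R"
    and adj: "\<And>a b. a \<in> U \<Longrightarrow> b \<in> U \<Longrightarrow> gaifman_adj A a b \<Longrightarrow> h a \<noteq> h b \<Longrightarrow>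
      gaifman_adj B (h a) (h b)"
  shows "h ` U \<in> guarded g B"
proof (cases g)
  case Atom
  then show ?thesis
    using guarded_Atom_image[OF U[unfolded Atom] carrier rel] by simp
next
  case Loose
  then show ?thesis
    using guarded_Loose_image[OF U[unfolded Loose] carrier rel] by simp
next
  case Clique
  then show ?thesis
    using guarded_Clique_image[OF U[unfolded Clique] carrier adj] by simp
qed

lemma guarded_image_hom:
  assumes wf: "wf_struc ar A" and h: "struc_hom A B h" and U: "U \<in> guarded g A"
  shows "h ` U \<in> guarded g B"
  using U
proof (rule guarded_image)
  show "h a \<in> carrier B" if "a \<in> U" for a
    using h guarded_subset_carrier[OF wf U] that unfolding struc_hom_def by blast
  show "map h t \<in> rel B R" if "t \<in> rel A R" for R t
    using h that unfolding struc_hom_def by blast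
  show "gaifman_adj B (h a) (h b)" if ab: "gaifman_adj A a b" "h a \<noteq> h b" for a b
  proof -
    obtain R t where "t \<in> rel A R" "a \<in> set t" "b \<in> set t"
      using ab(1) unfolding gaifman_adj_def by blast
    then have "map h t \<in> rel B R" "h a \<in> set (map h t)" "h b \<in> set (map h t)"
      using h unfolding struc_hom_def by auto
    with ab(2) show ?thesis
      unfolding gaifman_adj_def by blast
  qed
qed

section \<open>Guarded sets of the guarded comonad\<close>

lemma carrier_GG: "carrier (GG g A) = pcar (guarded g A)"
  by (simp add: GG_def)

lemma rel_GG:
  "t' \<in> rel (GG g A) R \<longleftrightarrow>
     (\<exists>p t. t' = map (\<lambda>b. cls (guarded g A) (p, b)) t \<and>
        p \<noteq> [] \<and> set p \<subseteq> guarded g A \<and> t \<in> rel A R \<and> set t \<subseteq> last p)"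
  by (simp add: GG_def)

lemma wf_GG:
  assumes "wf_struc ar A"
  shows "wf_struc ar (GG g A)"
  unfolding wf_struc_def
proof (intro allI ballI)
  fix R t'
  assume "t' \<in> rel (GG g A) R"
  then obtain p t where t': "t' = map (\<lambda>b. cls (guarded g A) (p, b)) t"
    and p: "p \<noteq> []" "set p \<subseteq> guarded g A" and t: "t \<in> rel A R" "set t \<subseteq> last p"
    unfolding rel_GG by blast
  have "length t = ar R"
    using assms t(1) unfolding wf_struc_def by blast
  moreover have "cls (guarded g A) (p, b) \<in> pcar (guarded g A)" if "b \<in> set t" for b
    using cls_in_pcar[OF fplaysI[OF p]] t(2) that by blast
  ultimately show "length t' = ar R \<and> set t' \<subseteq> carrier (GG g A)"
    unfolding t' carrier_GG by auto
qed

lemma struc_hom_peps: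
  assumes wf: "wf_struc ar A"
  shows "struc_hom (GG g A) A peps"
  unfolding struc_hom_def
proof (intro conjI allI ballI)
  fix x
  assume "x \<in> carrier (GG g A)"
  then obtain q where "(q, peps x) \<in> fplays (guarded g A)"
    unfolding carrier_GG by (rule pcarE)
  then have "peps x \<in> last q" "last q \<in> guarded g A"
    unfolding fplays_def by auto
  then show "peps x \<in> carrier A"
    using guarded_subset_carrier[OF wf] by blast
next
  fix R t'
  assume "t' \<in> rel (GG g A) R"
  then obtain p t where t': "t' = map (\<lambda>b. cls (guarded g A) (p, b)) t"
    and p: "p \<noteq> []" "set p \<subseteq> guarded g A" and t: "t \<in> rel A R" "set t \<subseteq> last p"
    unfolding rel_GG by blast
  have "map peps t' = t"
    unfolding t' using peps_cls[OF fplaysI[OF p]] t(2) by (simp add: map_idI subsetD)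
  with t(1) show "map peps t' \<in> rel A R"
    by simp
qed

lemma gaifman_adj_GG_imp_share_play:
  assumes "gaifman_adj (GG g A) x y"
  shows "share_play x y"
proof -
  let ?E = "guarded g A"
  obtain R t' where "t' \<in> rel (GG g A) R" "x \<in> set t'" "y \<in> set t'"
    using assms unfolding gaifman_adj_def by blast
  then obtain p t where t': "t' = map (\<lambda>b. cls ?E (p, b)) t"
    and p: "p \<noteq> []" "set p \<subseteq> ?E" and t: "set t \<subseteq> last p" "x \<in> set t'" "y \<in> set t'"
    unfolding rel_GG by blast
  have "(p, peps z) \<in> z" if z: "z \<in> set t'" for z
  proof -
    obtain b where b: "b \<in> last p" and zb: "z = cls ?E (p, b)"
      using z t(1) unfolding t' by auto
    have pb: "(p, b) \<in> fplays ?E"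
      using fplaysI[OF p b] .
    then have "peps z = b"
      unfolding zb by (simp add: peps_cls)
    with pb show ?thesis
      unfolding zb by (simp add: in_cls_self)
  qed
  with t(2,3) show ?thesis
    unfolding share_play_def by blast
qed

text \<open>Extend the play by the tuple witnessing the adjacency.\<close>

lemma gaifman_adj_GG_cls:
  assumes wf: "wf_struc ar A" and p: "p \<noteq> []" "set p \<subseteq> guarded g A"
    and ab: "a \<in> last p" "b \<in> last p" "gaifman_adj A a b"
  shows "gaifman_adj (GG g A) (cls (guarded g A) (p, a)) (cls (guarded g A) (p, b))"
proof -
  let ?E = "guarded g A"
  obtain R t where t: "t \<in> rel A R" "a \<in> set t" "b \<in> set t" and "a \<noteq> b"
    using ab(3) unfolding gaifman_adj_def by blast
  let ?p = "p @ [set t]"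
  have tE: "set t \<in> ?E"
    using set_tuple_guarded[OF wf t(1)] .
  have snoc: "cls ?E (?p, c) = cls ?E (p, c)" if "c \<in> set t" "c \<in> last p" for c
    using cls_snoc[OF fplaysI[OF p that(2)] tE that(1)] .
  have "map (\<lambda>c. cls ?E (?p, c)) t \<in> rel (GG g A) R"
    unfolding rel_GG using p tE t(1) by (intro exI[of _ ?p] exI[of _ t]) auto
  moreover have "cls ?E (p, a) \<in> set (map (\<lambda>c. cls ?E (?p, c)) t)"
    using rev_image_eqI[of a "set t" _ "\<lambda>c. cls ?E (?p, c)"] t(2) snoc[OF t(2) ab(1)] by simp
  moreover have "cls ?E (p, b) \<in> set (map (\<lambda>c. cls ?E (?p, c)) t)"
    using rev_image_eqI[of b "set t" _ "\<lambda>c. cls ?E (?p, c)"] t(3) snoc[OF t(3) ab(2)] by simp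
  moreover have "cls ?E (p, a) \<noteq> cls ?E (p, b)"
    using peps_cls[OF fplaysI[OF p ab(1)]] peps_cls[OF fplaysI[OF p ab(2)]] \<open>a \<noteq> b\<close>
    by auto
  ultimately show ?thesis
    unfolding gaifman_adj_def by blast
qed

lemma tset_guarded_GG:
  assumes wf: "wf_struc ar A" and p: "p \<noteq> []" "set p \<subseteq> guarded g A"
  shows "tset (guarded g A) p \<in> guarded g (GG g A)"
  unfolding tset_def
proof (rule guarded_image)
  show "last p \<in> guarded g A"
    using last_in_set[OF p(1)] p(2) by blast
  show "cls (guarded g A) (p, b) \<in> carrier (GG g A)" if "b \<in> last p" for b
    unfolding carrier_GG using cls_in_pcar[OF fplaysI[OF p that]] .
  show "map (\<lambda>b. cls (guarded g A) (p, b)) t \<in> rel (GG g A) R"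
    if "t \<in> rel A R" "set t \<subseteq> last p" for R t
    unfolding rel_GG using p that by blast
  show "gaifman_adj (GG g A) (cls (guarded g A) (p, a)) (cls (guarded g A) (p, b))"
    if "a \<in> last p" "b \<in> last p" "gaifman_adj A a b" for a b
    using gaifman_adj_GG_cls[OF wf p that] .
qed

lemma guarded_GG_imp_tset:
  assumes wf: "wf_struc ar A" and S: "S \<in> guarded g (GG g A)"
  shows "\<exists>p. p \<noteq> [] \<and> set p \<subseteq> guarded g A \<and> S = tset (guarded g A) p"
proof (rule ex_tset_eq_if_share_play)
  have clique: "finite S" "S \<subseteq> pcar (guarded g A)"
    "\<forall>x \<in> S. \<forall>y \<in> S. x \<noteq> y \<longrightarrow> gaifman_adj (GG g A) x y"
    using guarded_imp_clique[OF wf_GG[OF wf] S] unfolding guarded_Clique_iff carrier_GG by simp_all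
  then show "finite S" "S \<subseteq> pcar (guarded g A)"
    by simp_all
  show "\<forall>x \<in> S. \<forall>y \<in> S. share_play x y"
  proof (intro ballI)
    fix x y
    assume "x \<in> S" "y \<in> S"
    show "share_play x y"
    proof (cases "x = y")
      case True
      with \<open>x \<in> S\<close> clique(2) show ?thesis
        using share_play_refl[of x "guarded g A"] by blast
    next
      case False
      with \<open>x \<in> S\<close> \<open>y \<in> S\<close> clique(3) show ?thesis
        using gaifman_adj_GG_imp_share_play[of g A x y] by blast
    qed
  qed
  show "peps ` S \<in> guarded g A"
    using guarded_image_hom[OF wf_GG[OF wf] struc_hom_peps[OF wf] S] .
qed

lemma guarded_GG_eq_edges_HH:
  assumes "wf_struc ar A"
  shows "guarded g (GG g A) = snd (HH (Hg g A))"
  unfolding HH_def Hg_def snd_conv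
proof (intro equalityI subsetI)
  fix S
  assume "S \<in> guarded g (GG g A)"
  then show "S \<in> {tset (guarded g A) p |p. p \<noteq> [] \<and> set p \<subseteq> guarded g A}"
    using guarded_GG_imp_tset[OF assms] by blast
next
  fix S
  assume "S \<in> {tset (guarded g A) p |p. p \<noteq> [] \<and> set p \<subseteq> guarded g A}"
  then show "S \<in> guarded g (GG g A)"
    using tset_guarded_GG[OF assms] by blast
qed

lemma pmap_ident: "pmap E0 E (\<lambda>x. x) X = (\<Union>y\<in>X. cls E y)"
proof -
  have "map ((`) (\<lambda>x. x)) p = p" for p :: "'a set list"
    by (induction p) auto
  then show ?thesis
    unfolding pmap_def by auto
qed

lemma pmap_id_pdelta: "pmap E0 E' (\<lambda>x. x) (pdelta E E' x) = pdelta E E' x"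
  unfolding pmap_ident
proof (intro equalityI subsetI)
  fix z
  assume "z \<in> (\<Union>y\<in>pdelta E E' x. cls E' y)"
  then obtain y p a where "(p, a) \<in> x" "y \<in> cls E' (lift_play E p, x)" "z \<in> cls E' y"
    unfolding pdelta_def by blast
  then have "z \<in> cls E' (lift_play E p, x)"
    using cls_eq[of y E' "(lift_play E p, x)"] by simp
  with \<open>(p, a) \<in> x\<close> show "z \<in> pdelta E E' x"
    unfolding pdelta_def by blast
next
  fix y
  assume y: "y \<in> pdelta E E' x"
  then have "y \<in> fplays E'"
    unfolding pdelta_def using cls_subset_fplays by blast
  with y show "y \<in> (\<Union>y\<in>pdelta E E' x. cls E' y)"
    using in_cls_self[of y E'] by blast
qed

lemma hyper_iso_id: "hyper_iso H H (\<lambda>x. x)"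
  unfolding hyper_iso_def hyper_hom_def by auto

theorem theorem6p3:
  fixes g :: guarding and ar :: "'r \<Rightarrow> nat"
  shows
    \<comment> \<open>each component is an isomorphism H^g(G A) to H(H^g A)\<close>
    "(\<forall>A :: ('r, 'a) struc. wf_struc ar A \<longrightarrow>
        hyper_iso (Hg g (GG g A)) (HH (Hg g A)) (theta g A))
     \<comment> \<open>naturality\<close>
     \<and> (\<forall>(A :: ('r, 'a) struc) (B :: ('r, 'b) struc) f.
          wf_struc ar A \<and> wf_struc ar B \<and> struc_hom A B f \<longrightarrow>
          (\<forall>x \<in> carrier (GG g A).
             theta g B (GG_map g A B f x) = HH_map (Hg g A) (Hg g B) f (theta g A x)))
     \<comment> \<open>compatibility with the counits\<close>
     \<and> (\<forall>A :: ('r, 'a) struc. wf_struc ar A \<longrightarrow>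
          (\<forall>x \<in> carrier (GG g A). HH_eps (Hg g A) (theta g A x) = GG_eps g A x))
     \<comment> \<open>compatibility with the comultiplications\<close>
     \<and> (\<forall>A :: ('r, 'a) struc. wf_struc ar A \<longrightarrow>
          (\<forall>x \<in> carrier (GG g A).
             HH_delta (Hg g A) (theta g A x) =
             HH_map (Hg g (GG g A)) (HH (Hg g A)) (theta g A)
               (theta g (GG g A) (GG_delta g A x))))"
proof (intro conjI allI impI ballI)
  fix A :: "('r, 'a) struc"
  assume wf: "wf_struc ar A"
  have "Hg g (GG g A) = HH (Hg g A)"
    using guarded_GG_eq_edges_HH[OF wf] by (simp add: prod_eq_iff Hg_def HH_def carrier_GG)
  then show "hyper_iso (Hg g (GG g A)) (HH (Hg g A)) (theta g A)"
    unfolding theta_def using hyper_iso_id by metis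
next
  fix A :: "('r, 'a) struc" and B :: "('r, 'b) struc" and f x
  show "theta g B (GG_map g A B f x) = HH_map (Hg g A) (Hg g B) f (theta g A x)"
    unfolding theta_def GG_map_def HH_map_def Hg_def by simp
next
  fix A :: "('r, 'a) struc" and x
  show "HH_eps (Hg g A) (theta g A x) = GG_eps g A x"
    unfolding theta_def HH_eps_def GG_eps_def ..
next
  fix A :: "('r, 'a) struc" and x
  assume wf: "wf_struc ar A"
  show "HH_delta (Hg g A) (theta g A x) =
      HH_map (Hg g (GG g A)) (HH (Hg g A)) (theta g A) (theta g (GG g A) (GG_delta g A x))"
    unfolding theta_def HH_delta_def HH_map_def GG_delta_def guarded_GG_eq_edges_HH[OF wf]
    by (simp add: Hg_def pmap_id_pdelta)
qed

end
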